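(* Let $m,n\ge0$, $0\le k\le\min(m,n)$, and let $i,j$ be integers with $0\le i\le m$, $0\le j\le n$, $k\le i+j\le m+n-k$. Then $$c_{m,n,k}(i,j)=\sum_{l=0}^{k}(-1)^l\binom{i+j-k}{i-l}\binom{m-i}{k-l}\binom{n-j}{l}.$$
   Context: Binomial coefficients $\binom{a}{b}$ equal $\frac{a!}{b!(a-b)!}$ when $0\le b\le a$ and $0$ otherwise. Let $e,f,h$ be the standard basis of $\mathfrak{sl}(2,\mathbb{C})$. $V(n)$ is the irreducible representation of highest weight $n$ with fixed highest weight vector $\phi_n$; $\{f^i\phi_n\}_{0\le i\le n}$ is a basis, $f^{n+1}\phi_n=0$. $\mathfrak{sl}(2)$ acts on $V(m)\otimes V(n)$ by $X(v\otimes w)=Xv\otimes w+v\otimes Xw$. For $0\le k\le\min(m,n)$, $\phi_{m,n,k}=\sum_{l=0}^{k}(-1)^l\binom{m-l}{k-l}\binom{n-k+l}{l} f^l\phi_m\otimes f^{k-l}\phi_n$ (a highest weight vector of weight $m+n-2k$). The coordinates $c_{m,n,k}(i,j)$ are defined by $f^{p-k}\phi_{m,n,k}=\sum_{i+j=p,\,0\le i\le m,\,0\le j\le n} c_{m,n,k}(i,j)\, f^i\phi_m\otimes f^j\phi_n$ for $k\le p\le m+n-k$. *)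

theory Defs
  imports Main
begin

definition binom :: "int \<Rightarrow> int \<Rightarrow> int" where
  "binom a b = (if 0 \<le> b \<and> b \<le> a then int (nat a choose nat b) else 0)"

text \<open>A vector of V(m) \<otimes> V(n) is represented by its coordinates
  c i j w.r.t. the basis f^i phi_m \<otimes> f^j phi_n (0 \<le> i \<le> m, 0 \<le> j \<le> n);
  coordinates outside that range are 0.\<close>
type_synonym coords = "nat \<Rightarrow> nat \<Rightarrow> int"

text \<open>Action of f on V(m) \<otimes> V(n):
  f(f^i phi_m \<otimes> f^j phi_n) = f^(i+1) phi_m \<otimes> f^j phi_n + f^i phi_m \<otimes> f^(j+1) phi_n,
  with f^(m+1) phi_m = 0 and f^(n+1) phi_n = 0.\<close>
definition f_act :: "nat \<Rightarrow> nat \<Rightarrow> coords \<Rightarrow> coords" where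
  "f_act m n c = (\<lambda>i j. if i \<le> m \<and> j \<le> n then
      (if 0 < i then c (i - 1) j else 0) + (if 0 < j then c i (j - 1) else 0) else 0)"

definition phi_hw :: "nat \<Rightarrow> nat \<Rightarrow> nat \<Rightarrow> coords" where
  "phi_hw m n k = (\<lambda>i j. if i \<le> k \<and> i + j = k \<and> i \<le> m \<and> j \<le> n then
      (-1) ^ i * binom (int m - int i) (int k - int i) * binom (int n - int k + int i) (int i)
    else 0)"

definition coord :: "nat \<Rightarrow> nat \<Rightarrow> nat \<Rightarrow> nat \<Rightarrow> nat \<Rightarrow> int" where
  "coord m n k i j = ((f_act m n ^^ (i + j - k)) (phi_hw m n k)) i j"

end

theory Submission
  imports Defs
begin

text \<open>The coordinates of the iterates f^p phi_{m,n,k} obey the recursion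
  c(i,j) = c(i-1,j) + c(i,j-1) on the diagonal i + j = k + p, with the coordinates of
  phi_{m,n,k} itself as initial values on i + j = k. The closed formula satisfies the same
  recursion: applying Pascal's rule to each of its three binomials, the sum splits into the
  two neighbouring closed formulas plus a telescoping remainder. On the boundary i = 0 or
  j = 0 the missing neighbour is automatically zero, because the top binomial vanishes
  termwise there.\<close>

lemma binom_nonneg_left:
  "0 \<le> a \<Longrightarrow> binom a b = (if 0 \<le> b then int (nat a choose nat b) else 0)"
  unfolding binom_def by (auto simp: binomial_eq_0)

lemma binom_neg_right: "b < 0 \<Longrightarrow> binom a b = 0"
  unfolding binom_def by simp

lemma binom_0_left: "binom 0 b = (if b = 0 then 1 else 0)"
  unfolding binom_def by auto

lemma binom_Suc_left:
  assumes "0 \<le> a"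
  shows "binom (a + 1) b = binom a (b - 1) + binom a b"
proof (cases "1 \<le> b")
  case True
  have "nat (a + 1) = Suc (nat a)" and "nat b = Suc (nat (b - 1))"
    using assms True by simp_all
  then show ?thesis
    using assms True by (simp add: binom_nonneg_left)
next
  case False
  then show ?thesis
    using assms by (cases "b = 0") (auto simp: binom_nonneg_left)
qed

definition alt_binom_sum :: "int \<Rightarrow> int \<Rightarrow> int \<Rightarrow> int \<Rightarrow> nat \<Rightarrow> int" where
  "alt_binom_sum p i A B k =
     (\<Sum>l = 0..k. (-1) ^ l * binom p (i - int l) * binom A (int k - int l) * binom B (int l))"

lemma alt_binom_sum_pascal:
  assumes "1 \<le> p" "0 \<le> A" "0 \<le> B"
  shows "alt_binom_sum p i A B k =
    alt_binom_sum (p - 1) (i - 1) (A + 1) B k + alt_binom_sum (p - 1) i A (B + 1) k"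
proof -
  \<comment> \<open>Pascal's rule on all three factors leaves exactly the difference h (Suc l) - h l.\<close>
  define h where
    "h l = (-1) ^ l * binom (p - 1) (i - int l) * binom A (int k - int l) * binom B (int l - 1)"
    for l :: nat
  have "(-1) ^ l * binom p (i - int l) * binom A (int k - int l) * binom B (int l) =
      (-1) ^ l * binom (p - 1) (i - 1 - int l) * binom (A + 1) (int k - int l) * binom B (int l)
    + (-1) ^ l * binom (p - 1) (i - int l) * binom A (int k - int l) * binom (B + 1) (int l)
    + (h (Suc l) - h l)" for l
    using binom_Suc_left[of "p - 1" "i - int l"] binom_Suc_left[of A "int k - int l"]
      binom_Suc_left[of B "int l"] assms
    by (simp add: h_def algebra_simps)
  then have "alt_binom_sum p i A B k =
      alt_binom_sum (p - 1) (i - 1) (A + 1) B k + alt_binom_sum (p - 1) i A (B + 1) k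
    + (\<Sum>l\<le>k. h (Suc l) - h l)"
    unfolding alt_binom_sum_def atLeast0AtMost by (simp add: sum.distrib)
  moreover have "(\<Sum>l\<le>k. h (Suc l) - h l) = 0"
    using sum_lessThan_telescope[of h "Suc k"]
    by (simp add: lessThan_Suc_atMost h_def binom_neg_right)
  ultimately show ?thesis by simp
qed

lemma alt_binom_sum_eq_0:
  assumes "i < 0 \<or> p + int k < i"
  shows "alt_binom_sum p i A B k = 0"
  unfolding alt_binom_sum_def using assms
  by (intro sum.neutral) (auto simp: binom_def)

definition coord_formula :: "nat \<Rightarrow> nat \<Rightarrow> nat \<Rightarrow> nat \<Rightarrow> nat \<Rightarrow> int" where
  "coord_formula m n k i j =
     alt_binom_sum (int i + int j - int k) (int i) (int m - int i) (int n - int j) k"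

lemma coord_formula_initial:
  assumes "i + j = k" "i \<le> m" "j \<le> n"
  shows "coord_formula m n k i j =
    (-1) ^ i * binom (int m - int i) (int k - int i) * binom (int n - int k + int i) (int i)"
proof -
  have "coord_formula m n k i j = (\<Sum>l = 0..k. if l = i then
      (-1) ^ i * binom (int m - int i) (int k - int i) * binom (int n - int k + int i) (int i) else 0)"
    unfolding coord_formula_def alt_binom_sum_def using assms
    by (intro sum.cong) (auto simp: binom_0_left)
  then show ?thesis
    using assms by simp
qed

lemma coord_formula_recurrence:
  assumes "i \<le> m" "j \<le> n" "k < i + j"
  shows "coord_formula m n k i j =
    (if 0 < i then coord_formula m n k (i - 1) j else 0) +
    (if 0 < j then coord_formula m n k i (j - 1) else 0)"
proof -
  let ?p = "int i + int j - int k"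
  have "coord_formula m n k i j =
      alt_binom_sum (?p - 1) (int i - 1) (int m - int i + 1) (int n - int j) k
    + alt_binom_sum (?p - 1) (int i) (int m - int i) (int n - int j + 1) k"
    unfolding coord_formula_def using assms by (intro alt_binom_sum_pascal) auto
  moreover have "alt_binom_sum (?p - 1) (int i - 1) (int m - int i + 1) (int n - int j) k =
      (if 0 < i then coord_formula m n k (i - 1) j else 0)"
    by (auto simp: coord_formula_def of_nat_diff alt_binom_sum_eq_0 algebra_simps)
  moreover have "alt_binom_sum (?p - 1) (int i) (int m - int i) (int n - int j + 1) k =
      (if 0 < j then coord_formula m n k i (j - 1) else 0)"
    by (auto simp: coord_formula_def of_nat_diff alt_binom_sum_eq_0 algebra_simps)
  ultimately show ?thesis by simp
qed

lemma f_act_pow_phi_hw: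
  "(f_act m n ^^ p) (phi_hw m n k) i j =
    (if i \<le> m \<and> j \<le> n \<and> i + j = k + p then coord_formula m n k i j else 0)"
proof (induction p arbitrary: i j)
  case 0
  then show ?case by (auto simp: phi_hw_def coord_formula_initial)
next
  case (Suc p)
  have "(f_act m n ^^ Suc p) (phi_hw m n k) i j =
      f_act m n ((f_act m n ^^ p) (phi_hw m n k)) i j"
    by simp
  also have "\<dots> = (if i \<le> m \<and> j \<le> n \<and> i + j = k + Suc p then coord_formula m n k i j else 0)"
    unfolding f_act_def Suc.IH using coord_formula_recurrence[of i m j n k] by auto
  finally show ?case .
qed

theorem proposition9p2:
  fixes m n k i j :: nat
  assumes "k \<le> min m n" and "i \<le> m" and "j \<le> n"
    and "k \<le> i + j" and "i + j \<le> m + n - k"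
  shows "coord m n k i j =
    (\<Sum>l = 0..k. (-1) ^ l * binom (int i + int j - int k) (int i - int l)
                 * binom (int m - int i) (int k - int l) * binom (int n - int j) (int l))"
  using assms(2-4) by (simp add: coord_def f_act_pow_phi_hw coord_formula_def alt_binom_sum_def)

end
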